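(* Let $t\ge 3$ and let $G_t$ be the labeling of the complete graph $K_{2t}$ in which the edges of a fixed perfect matching are labeled $-$ and all other edges are labeled $+$. Consider the linear program $\mathsf{L}$ in variables $M\in\mathbb{R}$ and $x_{uv}$ for each unordered pair $uv$ of distinct vertices: minimize $M$ subject to $x_{uv}\le x_{uz}+x_{zv}$ for all distinct $u,v,z$; $\sum_{w\in N^+(v)}x_{vw}+\sum_{w\in N^-(v)}(1-x_{vw})\le M$ for all vertices $v$; and $0\le x_{e}\le 1$ for all edges $e$. Then the unique optimal solution of $\mathsf{L}$ has $x_{uv}=0$ for all edges $uv$ of $G_t$.
   Context: $N^+(v)$ and $N^-(v)$ denote the sets of vertices joined to $v$ by a $+$ edge, resp. a $-$ edge. *)

theory Defs
  imports Complex_Main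
begin

text \<open>Vertex set V of the complete graph; edges are 2-element sets {u,v}, u \<noteq> v.
  The labeling G_t: edges in the perfect matching PM are labelled -, all others +.\<close>

definition perfect_matching :: "'a set \<Rightarrow> 'a set set \<Rightarrow> bool" where
  "perfect_matching V PM \<longleftrightarrow>
     (\<forall>e\<in>PM. \<exists>u\<in>V. \<exists>v\<in>V. u \<noteq> v \<and> e = {u, v}) \<and>
     (\<forall>v\<in>V. \<exists>!e. e \<in> PM \<and> v \<in> e)"

definition Npos :: "'a set \<Rightarrow> 'a set set \<Rightarrow> 'a \<Rightarrow> 'a set" where
  "Npos V PM v = {w \<in> V. w \<noteq> v \<and> {v, w} \<notin> PM}"

definition Nneg :: "'a set \<Rightarrow> 'a set set \<Rightarrow> 'a \<Rightarrow> 'a set" where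
  "Nneg V PM v = {w \<in> V. w \<noteq> v \<and> {v, w} \<in> PM}"

definition L_feasible :: "'a set \<Rightarrow> 'a set set \<Rightarrow> real \<Rightarrow> ('a set \<Rightarrow> real) \<Rightarrow> bool" where
  "L_feasible V PM M x \<longleftrightarrow>
     (\<forall>u\<in>V. \<forall>v\<in>V. \<forall>z\<in>V. u \<noteq> v \<and> u \<noteq> z \<and> v \<noteq> z \<longrightarrow> x {u, v} \<le> x {u, z} + x {z, v}) \<and>
     (\<forall>v\<in>V. (\<Sum>w\<in>Npos V PM v. x {v, w}) + (\<Sum>w\<in>Nneg V PM v. 1 - x {v, w}) \<le> M) \<and>
     (\<forall>u\<in>V. \<forall>v\<in>V. u \<noteq> v \<longrightarrow> 0 \<le> x {u, v} \<and> x {u, v} \<le> 1)"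

definition L_optimal :: "'a set \<Rightarrow> 'a set set \<Rightarrow> real \<Rightarrow> ('a set \<Rightarrow> real) \<Rightarrow> bool" where
  "L_optimal V PM M x \<longleftrightarrow> L_feasible V PM M x \<and> (\<forall>M' x'. L_feasible V PM M' x' \<longrightarrow> M \<le> M')"

end

theory Submission
  imports Defs
begin

text \<open>Let \<open>p\<close> be the matching partner of a vertex \<open>v\<close> and \<open>A = V - {v,p}\<close>. Adding the degree
  constraints at \<open>v\<close> and at \<open>p\<close>, and bounding \<open>x\<^sub>v\<^sub>p \<le> x\<^sub>v\<^sub>w + x\<^sub>w\<^sub>p\<close> for each of the
  \<open>|A| = 2t - 2\<close> vertices \<open>w \<in> A\<close>, gives \<open>2 + (2t - 4) x\<^sub>v\<^sub>p \<le> 2M\<close>. Hence \<open>M \<ge> 1\<close>, which the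
  zero solution attains; and if \<open>M = 1\<close> then \<open>t \<ge> 3\<close> forces \<open>x\<^sub>v\<^sub>p = 0\<close>, after which the
  constraint at \<open>v\<close> reads \<open>\<Sum>\<^bsub>w \<in> A\<^esub> x\<^sub>v\<^sub>w \<le> 0\<close>, so every variable vanishes.\<close>

lemma perfect_matching_partner:
  assumes pm: "perfect_matching V PM" and v: "v \<in> V"
  obtains p where "p \<in> V" "p \<noteq> v" "{v, p} \<in> PM"
    "Nneg V PM v = {p}" "Npos V PM v = V - {v, p}"
proof -
  from pm v obtain e where e: "e \<in> PM" "v \<in> e" and uniq: "\<And>e'. e' \<in> PM \<Longrightarrow> v \<in> e' \<Longrightarrow> e' = e"
    unfolding perfect_matching_def by metis
  from pm e obtain a b where "a \<in> V" "b \<in> V" "a \<noteq> b" "e = {a, b}"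
    unfolding perfect_matching_def by metis
  then obtain p where p: "p \<in> V" "p \<noteq> v" "e = {v, p}"
    using e(2) by (metis insert_commute insert_iff singletonD)
  have Nneg: "Nneg V PM v = {p}"
  proof (intro equalityI subsetI)
    fix w assume "w \<in> Nneg V PM v"
    then have "w \<noteq> v" "{v, w} = {v, p}"
      using uniq p(3) unfolding Nneg_def by auto
    then show "w \<in> {p}" by (metis doubleton_eq_iff singletonI)
  qed (use p e in \<open>auto simp: Nneg_def\<close>)
  have "Npos V PM v = V - {v, p}"
    using Nneg p e unfolding Npos_def Nneg_def by blast
  with p e Nneg show thesis using that by auto
qed

lemma perfect_matching_neighbourhoods:
  assumes pm: "perfect_matching V PM" and "v \<in> V" "p \<in> V" "p \<noteq> v" "{v, p} \<in> PM"
  shows "Nneg V PM v = {p}" "Npos V PM v = V - {v, p}"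
proof -
  obtain q where "Nneg V PM v = {q}" "Npos V PM v = V - {v, q}"
    using perfect_matching_partner[OF pm \<open>v \<in> V\<close>] by metis
  moreover have "p \<in> Nneg V PM v" using assms unfolding Nneg_def by simp
  ultimately show "Nneg V PM v = {p}" "Npos V PM v = V - {v, p}" by auto
qed

lemma L_feasible_triangle:
  "L_feasible V PM M x \<Longrightarrow> u \<in> V \<Longrightarrow> v \<in> V \<Longrightarrow> z \<in> V \<Longrightarrow> u \<noteq> v \<Longrightarrow> u \<noteq> z \<Longrightarrow> v \<noteq> z
    \<Longrightarrow> x {u, v} \<le> x {u, z} + x {z, v}"
  unfolding L_feasible_def by blast

lemma L_feasible_vertex_bound:
  "L_feasible V PM M x \<Longrightarrow> v \<in> V
    \<Longrightarrow> (\<Sum>w\<in>Npos V PM v. x {v, w}) + (\<Sum>w\<in>Nneg V PM v. 1 - x {v, w}) \<le> M"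
  unfolding L_feasible_def by blast

lemma L_feasible_nonneg:
  "L_feasible V PM M x \<Longrightarrow> u \<in> V \<Longrightarrow> v \<in> V \<Longrightarrow> u \<noteq> v \<Longrightarrow> 0 \<le> x {u, v}"
  unfolding L_feasible_def by blast

lemma L_feasible_zero: "perfect_matching V PM \<Longrightarrow> L_feasible V PM 1 (\<lambda>_. 0)"
  unfolding L_feasible_def
proof (intro conjI ballI impI)
  fix v assume "perfect_matching V PM" "v \<in> V"
  then obtain p where "Nneg V PM v = {p}"
    using perfect_matching_partner by metis
  then show "(\<Sum>w\<in>Npos V PM v. (0::real)) + (\<Sum>w\<in>Nneg V PM v. 1 - 0) \<le> 1" by simp
qed auto

lemma L_feasible_matched_pair_bound:
  assumes pm: "perfect_matching V PM" and fin: "finite V"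
    and F: "L_feasible V PM M x" and v: "v \<in> V" and p: "p \<in> V" "p \<noteq> v" "{v, p} \<in> PM"
  shows "2 + (real (card V) - 4) * x {v, p} \<le> 2 * M"
proof -
  define A where "A = V - {v, p}"
  have at_v: "(\<Sum>w\<in>A. x {v, w}) + (1 - x {v, p}) \<le> M"
    using L_feasible_vertex_bound[OF F v] perfect_matching_neighbourhoods[OF pm v p]
    unfolding A_def by simp
  have "{p, v} \<in> PM" using p(3) by (simp add: insert_commute)
  then have at_p: "(\<Sum>w\<in>A. x {p, w}) + (1 - x {v, p}) \<le> M"
    using L_feasible_vertex_bound[OF F p(1)] perfect_matching_neighbourhoods[OF pm p(1) v] p(2)
    unfolding A_def by (simp add: insert_commute)
  have "(\<Sum>w\<in>A. x {v, p}) \<le> (\<Sum>w\<in>A. x {v, w} + x {p, w})"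
  proof (rule sum_mono)
    fix w assume "w \<in> A"
    then have "x {v, p} \<le> x {v, w} + x {w, p}"
      using L_feasible_triangle[OF F v p(1)] p unfolding A_def by blast
    then show "x {v, p} \<le> x {v, w} + x {p, w}" by (simp add: insert_commute)
  qed
  moreover have "real (card A) = real (card V) - 2"
  proof -
    have "card {v, p} \<le> card V" using fin v p(1) by (intro card_mono) auto
    then show ?thesis
      unfolding A_def using fin v p by (simp add: card_Diff_subset)
  qed
  ultimately have "(real (card V) - 2) * x {v, p} \<le> (\<Sum>w\<in>A. x {v, w}) + (\<Sum>w\<in>A. x {p, w})"
    by (simp add: sum.distrib)
  with at_v at_p show ?thesis by (simp add: algebra_simps)
qed

lemma L_feasible_ge_one:
  assumes pm: "perfect_matching V PM" and card: "4 \<le> card V" and F: "L_feasible V PM M x"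
  shows "1 \<le> M"
proof -
  have fin: "finite V" and "V \<noteq> {}" using card by (auto intro: card_ge_0_finite)
  then obtain v where v: "v \<in> V" by blast
  then obtain p where p: "p \<in> V" "p \<noteq> v" "{v, p} \<in> PM"
    using perfect_matching_partner[OF pm] by metis
  have "2 + (real (card V) - 4) * x {v, p} \<le> 2 * M"
    using L_feasible_matched_pair_bound[OF pm fin F v p] .
  moreover have "0 \<le> (real (card V) - 4) * x {v, p}"
    using card L_feasible_nonneg[OF F p(1) v p(2)] by (simp add: insert_commute)
  ultimately show ?thesis by linarith
qed

lemma L_feasible_one_imp_zero:
  assumes pm: "perfect_matching V PM" and card: "4 < card V" and F: "L_feasible V PM 1 x"
    and u: "u \<in> V" and v: "v \<in> V" "u \<noteq> v"
  shows "x {u, v} = 0"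
proof -
  have fin: "finite V" using card card.infinite by fastforce
  obtain p where p: "p \<in> V" "p \<noteq> u" "{u, p} \<in> PM"
    and Nneg: "Nneg V PM u = {p}" and Npos: "Npos V PM u = V - {u, p}"
    using perfect_matching_partner[OF pm u] by metis
  have "(real (card V) - 4) * x {u, p} \<le> 0"
    using L_feasible_matched_pair_bound[OF pm fin F u p] by simp
  with card have "x {u, p} \<le> 0" by (simp add: mult_le_0_iff)
  moreover have "0 \<le> x {u, p}" using L_feasible_nonneg[OF F u p(1)] p(2) by simp
  ultimately have xp: "x {u, p} = 0" by simp
  have nonneg: "\<And>w. w \<in> V - {u, p} \<Longrightarrow> 0 \<le> x {u, w}"
    using L_feasible_nonneg[OF F u] by blast
  have "(\<Sum>w\<in>V - {u, p}. x {u, w}) \<le> 0"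
    using L_feasible_vertex_bound[OF F u] Nneg Npos xp by simp
  then have "(\<Sum>w\<in>V - {u, p}. x {u, w}) = 0"
    by (intro order_antisym sum_nonneg nonneg)
  then have "\<forall>w\<in>V - {u, p}. x {u, w} = 0"
    using sum_nonneg_eq_0_iff[of "V - {u, p}" "\<lambda>w. x {u, w}"] nonneg fin by blast
  with xp v show ?thesis by (cases "v = p") auto
qed

theorem proposition1:
  fixes V :: "'a set" and PM :: "'a set set" and t :: nat
  assumes "finite V" and "card V = 2 * t" and "t \<ge> 3"
    and "perfect_matching V PM"
  shows "\<exists>M x. L_optimal V PM M x \<and>
           (\<forall>M' x'. L_optimal V PM M' x' \<longrightarrow>
               M' = M \<and> (\<forall>u\<in>V. \<forall>v\<in>V. u \<noteq> v \<longrightarrow> x' {u, v} = x {u, v})) \<and>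
           (\<forall>u\<in>V. \<forall>v\<in>V. u \<noteq> v \<longrightarrow> x {u, v} = 0)"
proof -
  note pm = assms(4)
  have card: "4 < card V" using assms(2,3) by simp
  have opt: "L_optimal V PM 1 (\<lambda>_. 0)"
    unfolding L_optimal_def
    using L_feasible_zero[OF pm] L_feasible_ge_one[OF pm] card by auto
  have "M' = 1 \<and> (\<forall>u\<in>V. \<forall>v\<in>V. u \<noteq> v \<longrightarrow> x' {u, v} = 0)"
    if "L_optimal V PM M' x'" for M' x'
  proof -
    from that have "L_feasible V PM M' x'" "M' \<le> 1"
      using L_feasible_zero[OF pm] unfolding L_optimal_def by auto
    moreover from this have "M' = 1"
      using L_feasible_ge_one[OF pm] card by force
    ultimately show ?thesis
      using L_feasible_one_imp_zero[OF pm card] by auto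
  qed
  with opt show ?thesis by auto
qed

end
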